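(* Let $d\in\mathbb{N}$, $\mu_0,\ldots,\mu_d\in\mathbb{R}\setminus\{0\}$, $S_+=\{z\in\mathbb{C}:\operatorname{Im}z\ge0\}\setminus\{-\mu_0^{-2},\ldots,-\mu_d^{-2}\}$, $\omega=1-i$, and use the branch $\sqrt{re^{i\theta}}=\sqrt re^{i\theta/2}$ for $r\ge0$, $\theta\in[0,\pi]$. (a) For every $z\in S_+$ the limit $$I(z):=\lim_{B\to+\infty}\int_0^B\prod_{j=0}^d\Phi(\mu_j\sqrt z\,\omega y)\,e^{-\omega^2y^2/2}\omega\,dy=\int_0^{\omega\infty}\prod_{j=0}^d\Phi(\mu_j\sqrt z\,x)e^{-x^2/2}dx$$ exists and is finite, and for every $A>0$, \begin{align*} I(z)=&\int_0^A\prod_{j}\Phi(\mu_j\sqrt z\,\omega y)e^{-\omega^2y^2/2}\omega\,dy+\frac{1}{A\omega}\prod_j\Phi(\mu_j\sqrt z\,\omega A)e^{-\omega^2A^2/2} -\frac{1}{2\omega}\int_{A^2}^\infty\prod_j\Phi(\mu_j\sqrt z\,\omega\sqrt x)\frac{e^{-\omega^2x/2}}{x^{3/2}}dx\\ &+\sum_{\ell=0}^d\frac{\mu_\ell\sqrt z}{\sqrt{2\pi}\omega^2(1+\mu_\ell^2z)}\prod_{j\ne\ell}\Phi(\mu_j\sqrt z\,\omega A)\frac{1}{A^2}e^{-\frac{\omega^2A^2}{2}(1+\mu_\ell^2z)}\\ &-\sum_{\ell=0}^d\frac{\mu_\ell\sqrt z}{\sqrt{2\pi}\omega^2(1+\mu_\ell^2z)}\int_{A^2}^\infty\prod_{j\ne\ell}\Phi(\mu_j\sqrt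 z\,\omega\sqrt x)\frac{1}{x^2}e^{-\frac{\omega^2x}{2}(1+\mu_\ell^2z)}dx\\ &+\sum_{0\le\ell_1\ne\ell_2\le d}\frac{\mu_{\ell_1}\mu_{\ell_2}z}{4\pi\omega(1+\mu_{\ell_1}^2z)}\int_{A^2}^\infty\prod_{j\notin\{\ell_1,\ell_2\}}\Phi(\mu_j\sqrt z\,\omega\sqrt x)\frac{1}{x^{3/2}}e^{-\frac{\omega^2x}{2}(1+\mu_{\ell_1}^2z+\mu_{\ell_2}^2z)}dx, \end{align*} where all integrals over $[A^2,\infty)$ converge absolutely. (b) The function $z\mapsto I(z)$ is continuous on $S_+$ and analytic on the open upper half-plane $\{\operatorname{Im}z>0\}$.
   Context: $\Phi(z)=\frac12+\frac{1}{\sqrt{2\pi}}\int_0^ze^{-x^2/2}dx$ for $z\in\mathbb{C}$. For $\omega\ne0$, $\int_0^{\omega\infty}f(x)dx:=\lim_{B\to+\infty}\int_0^Bf(\omega y)\omega\,dy$. Products over $j$ range over $j\in\{0,\ldots,d\}$ (minus the excluded indices); $\sqrt x>0$ for $x>0$. *)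

theory Defs
  imports "HOL-Complex_Analysis.Complex_Analysis"
begin

definition Phi :: "complex \<Rightarrow> complex" where
  "Phi z = 1/2 + (1 / complex_of_real (sqrt (2*pi))) *
            contour_integral (linepath 0 z) (\<lambda>x. exp (- (x^2) / 2))"

definition omega :: complex where
  "omega = 1 - \<i>"

text \<open>The square root is the principal branch csqrt,
  which on the closed upper half-plane is the branch sqrt(r e^{i theta}) = sqrt r e^{i theta/2},
  theta in [0,pi].\<close>
definition PhiProd :: "nat \<Rightarrow> (nat \<Rightarrow> real) \<Rightarrow> nat set \<Rightarrow> complex \<Rightarrow> real \<Rightarrow> complex" where
  "PhiProd d \<mu> J z t =
     (\<Prod>j\<in>{0..d} - J. Phi (complex_of_real (\<mu> j) * csqrt z * omega * complex_of_real t))"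

definition Iintegrand :: "nat \<Rightarrow> (nat \<Rightarrow> real) \<Rightarrow> complex \<Rightarrow> real \<Rightarrow> complex" where
  "Iintegrand d \<mu> z y =
     PhiProd d \<mu> {} z y * exp (- (omega^2 * complex_of_real (y^2)) / 2) * omega"

definition Ifun :: "nat \<Rightarrow> (nat \<Rightarrow> real) \<Rightarrow> complex \<Rightarrow> complex" where
  "Ifun d \<mu> z = Lim at_top (\<lambda>B. integral {0..B} (Iintegrand d \<mu> z))"

end

theory Submission
  imports Defs
begin

text \<open>The complex normal distribution function \<open>Phi\<close> is bounded on the double sector
  \<open>\<bar>Im w\<bar> \<le> \<bar>Re w\<bar>\<close>, and for \<open>Im z \<ge> 0\<close> every point \<open>\<mu>\<^sub>j \<surd>z \<omega> y\<close> lies in it; since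
  \<open>\<bar>exp (- \<omega>\<^sup>2 y\<^sup>2 / 2)\<bar> = 1\<close>, the integrand is bounded but does not decay. Convergence comes from
  oscillation: one integration by parts against \<open>exp (- \<omega>\<^sup>2 y\<^sup>2 / 2)\<close> produces boundary terms of
  size \<open>O(1/A)\<close> and, after differentiating the product of the \<open>Phi\<close>'s and substituting \<open>x = y\<^sup>2\<close>,
  integrals over \<open>[A\<^sup>2, \<infinity>)\<close> of bounded functions times \<open>x\<^sup>-\<^sup>3\<^sup>/\<^sup>2\<close> or \<open>x\<^sup>-\<^sup>2\<close>. This yields the formula
  and an error bound \<open>K(z)/B\<close> for the integral truncated at \<open>B\<close>, with \<open>K\<close> continuous on \<open>S\<^sub>+\<close>.
  The convergence is therefore locally uniform, and continuity and analyticity pass from the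
  truncated integrals to \<open>I\<close>.\<close>

section \<open>Boundedness of \<open>Phi\<close> along the ray\<close>

definition gauss_primitive :: "complex \<Rightarrow> complex" where
  "gauss_primitive w = contour_integral (linepath 0 w) (\<lambda>x. exp (- (x^2) / 2))"

lemma has_field_derivative_gauss_primitive:
  "(gauss_primitive has_field_derivative exp (- (w^2) / 2)) (at w)"
proof -
  obtain G :: "complex \<Rightarrow> complex"
    where G: "\<And>x. x \<in> UNIV \<Longrightarrow> (G has_field_derivative exp (- (x^2) / 2)) (at x within UNIV)"
    by (rule holomorphic_convex_primitive'[of UNIV "\<lambda>x. exp (- (x^2) / 2)"])
       (auto intro!: holomorphic_intros)
  have primitive: "gauss_primitive = (\<lambda>w. G w - G 0)"
  proof
    fix w
    have "((\<lambda>x. exp (- (x^2) / 2)) has_contour_integral (G w - G 0)) (linepath 0 w)"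
      using contour_integral_primitive[of UNIV G "\<lambda>x. exp (- (x^2) / 2)" "linepath 0 w"] G
      by auto
    then show "gauss_primitive w = G w - G 0"
      unfolding gauss_primitive_def by (rule contour_integral_unique)
  qed
  show ?thesis unfolding primitive using G[of w] by (auto intro!: derivative_eq_intros)
qed

lemma gauss_primitive_chain [derivative_intros]:
  "(g has_field_derivative g') (at x within s) \<Longrightarrow>
   ((\<lambda>x. gauss_primitive (g x)) has_field_derivative exp (- ((g x)^2) / 2) * g') (at x within s)"
  by (rule DERIV_chain2[OF has_field_derivative_gauss_primitive])

lemma gauss_primitive_0 [simp]: "gauss_primitive 0 = 0"
  by (simp add: gauss_primitive_def)

lemma gauss_primitive_minus: "gauss_primitive (- w) = - gauss_primitive w"
proof -
  have "\<exists>c. \<forall>x\<in>UNIV. gauss_primitive x + gauss_primitive (- x) = c"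
    by (rule has_field_derivative_zero_constant) (auto intro!: derivative_eq_intros)
  then obtain c where c: "\<And>x. gauss_primitive x + gauss_primitive (- x) = c" by auto
  from c[of 0] c[of w] show ?thesis by (simp add: algebra_simps eq_neg_iff_add_eq_0)
qed

lemma Phi_eq_gauss_primitive: "Phi w = 1/2 + gauss_primitive w / complex_of_real (sqrt (2*pi))"
  by (simp add: Phi_def gauss_primitive_def)

lemma norm_diff_le_of_derivative_majorant:
  fixes v :: "real \<Rightarrow> 'a::banach" and u :: "real \<Rightarrow> real"
  assumes "a \<le> b"
    and v: "\<And>x. x \<in> {a..b} \<Longrightarrow> (v has_vector_derivative v' x) (at x within {a..b})"
    and u: "\<And>x. x \<in> {a..b} \<Longrightarrow> (u has_real_derivative u' x) (at x within {a..b})"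
    and le: "\<And>x. x \<in> {a..b} \<Longrightarrow> norm (v' x) \<le> u' x"
  shows "norm (v b - v a) \<le> u b - u a"
proof -
  have iv: "(v' has_integral (v b - v a)) {a..b}"
    by (rule fundamental_theorem_of_calculus[OF assms(1) v])
  have iu: "(u' has_integral (u b - u a)) {a..b}"
    by (rule fundamental_theorem_of_calculus[OF assms(1)])
       (use u in \<open>auto simp: has_real_derivative_iff_has_vector_derivative\<close>)
  have "norm (integral {a..b} v') \<le> integral {a..b} u'"
    by (rule integral_norm_bound_integral) (use iv iu le in auto)
  then show ?thesis using iv iu by (simp add: integral_unique)
qed

lemma norm_exp_neg_square_half: "norm (exp (- (w^2) / 2)) = exp ((Im w ^ 2 - Re w ^ 2) / 2)"
  by (simp add: power2_eq_square field_simps)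

lemma exp_half_le_2: "exp (1/2::real) \<le> 2"
proof (rule power2_le_imp_le)
  have "(exp (1/2::real))^2 = exp 1" by (simp flip: exp_of_nat_mult)
  then show "(exp (1/2::real))^2 \<le> 2^2" using exp_le by simp
qed simp

text \<open>On the real axis, compare with the primitive of the majorant
  \<open>exp (1/2 - x) \<ge> exp (- x\<^sup>2/2)\<close>.\<close>
lemma norm_gauss_primitive_of_real_le:
  assumes "a \<ge> 0"
  shows "norm (gauss_primitive (complex_of_real a)) \<le> 2"
proof -
  have "norm (gauss_primitive (of_real (1*a)) - gauss_primitive (of_real (0*a)))
          \<le> (- exp (1/2 - 1*a)) - (- exp (1/2 - 0*a))"
  proof (rule norm_diff_le_of_derivative_majorant[where v = "\<lambda>t. gauss_primitive (of_real (t*a))"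
        and v' = "\<lambda>t. exp (- ((complex_of_real (t*a))^2) / 2) * of_real a"
        and u' = "\<lambda>t. a * exp (1/2 - t*a)"])
    fix t :: real assume "t \<in> {0..1}"
    have "((\<lambda>t. gauss_primitive (of_real t * of_real a)) has_vector_derivative
            exp (- ((of_real t * of_real a)^2) / 2) * of_real a) (at t within {0..1})"
      by (rule has_vector_derivative_real_field) (auto intro!: derivative_eq_intros)
    then show "((\<lambda>t. gauss_primitive (of_real (t*a))) has_vector_derivative
                 exp (- ((of_real (t*a))^2) / 2) * of_real a) (at t within {0..1})"
      by simp
    show "((\<lambda>t. - exp (1/2 - t*a)) has_real_derivative a * exp (1/2 - t*a)) (at t within {0..1})"
      by (auto intro!: derivative_eq_intros)
    have "- ((t*a)^2) / 2 \<le> 1/2 - t*a"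
      using zero_le_power2[of "t*a - 1"] by (simp add: power2_diff)
    then have "norm (exp (- ((complex_of_real (t*a))^2) / 2)) \<le> exp (1/2 - t*a)"
      by (subst norm_exp_neg_square_half) simp
    then show "norm (exp (- ((complex_of_real (t*a))^2) / 2) * of_real a) \<le> a * exp (1/2 - t*a)"
      using assms by (simp add: norm_mult mult.commute mult_left_mono)
  qed simp
  also have "\<dots> \<le> 2" using exp_half_le_2 by (smt (verit) exp_gt_zero)
  finally show ?thesis by simp
qed

lemma has_vector_derivative_gauss_primitive_vertical:
  "((\<lambda>t. gauss_primitive (Complex a (t*b))) has_vector_derivative
      exp (- ((Complex a (t*b))^2) / 2) * (\<i> * of_real b)) (at t within S)"
proof -
  have "((\<lambda>t. gauss_primitive (complex_of_real a + \<i> * (of_real t * of_real b)))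
          has_vector_derivative exp (- ((complex_of_real a + \<i> * (of_real t * of_real b))^2) / 2)
            * (\<i> * of_real b)) (at t within S)"
    by (rule has_vector_derivative_real_field) (auto intro!: derivative_eq_intros)
  then show ?thesis by (simp add: Complex_eq)
qed

lemma norm_gauss_primitive_vertical_le:
  assumes "\<bar>b\<bar> \<le> a"
  shows "norm (gauss_primitive (Complex a b) - gauss_primitive (complex_of_real a)) \<le> 2"
proof -
  define v where "v = (\<lambda>t::real. gauss_primitive (Complex a (t*b)))"
  define v' where "v' = (\<lambda>t::real. exp (- ((Complex a (t*b))^2) / 2) * (\<i> * of_real b))"
  have v_deriv: "(v has_vector_derivative v' t) (at t within {0..1})" for t
    unfolding v_def v'_def by (rule has_vector_derivative_gauss_primitive_vertical)
  have norm_v': "norm (v' t) = \<bar>b\<bar> * exp (((t*b)^2 - a^2)/2)" for t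
    unfolding v'_def norm_mult by (subst norm_exp_neg_square_half) simp
  have v_diff: "v 1 - v 0 = gauss_primitive (Complex a b) - gauss_primitive (complex_of_real a)"
    by (simp add: v_def complex_of_real_def)
  have tb: "0 \<le> t * \<bar>b\<bar>" "t * \<bar>b\<bar> \<le> a" if "t \<in> {0..1}" for t
    using that assms by (auto intro: order_trans[OF mult_left_le_one_le])
  show ?thesis
  proof (cases "a \<le> 1")
    case True
    have "norm (v 1 - v 0) \<le> 1 - 0"
    proof (rule norm_diff_le_of_derivative_majorant[where u = "\<lambda>t. t" and u' = "\<lambda>t. 1"])
      fix t :: real assume t: "t \<in> {0..1}"
      show "(v has_vector_derivative v' t) (at t within {0..1})" by (rule v_deriv)
      show "((\<lambda>t. t) has_real_derivative 1) (at t within {0..1})"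
        by (auto intro!: derivative_eq_intros)
      have "\<bar>t*b\<bar> \<le> a" using tb[OF t] t by (simp add: abs_mult)
      then have "(t*b)^2 \<le> a^2" by (metis abs_le_square_iff abs_of_nonneg abs_ge_zero order_trans)
      then have "exp (((t*b)^2 - a^2)/2) \<le> 1" by simp
      moreover have "\<bar>b\<bar> \<le> 1" using assms True by linarith
      ultimately show "norm (v' t) \<le> 1" unfolding norm_v' by (simp add: mult_le_one)
    qed simp
    then show ?thesis using v_diff by simp
  next
    case False
    then have a_pos: "a > 0" by simp
    text \<open>Since \<open>(t b)\<^sup>2 - a\<^sup>2 \<le> a (t \<bar>b\<bar> - a)\<close>, the integrand is dominated by an exact derivative.\<close>
    have "norm (v 1 - v 0) \<le> (2/a) * exp (a*(1*\<bar>b\<bar> - a)/2) - (2/a) * exp (a*(0*\<bar>b\<bar> - a)/2)"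
    proof (rule norm_diff_le_of_derivative_majorant[where u = "\<lambda>t. (2/a) * exp (a*(t*\<bar>b\<bar> - a)/2)"
          and u' = "\<lambda>t. \<bar>b\<bar> * exp (a*(t*\<bar>b\<bar> - a)/2)"])
      fix t :: real assume t: "t \<in> {0..1}"
      show "(v has_vector_derivative v' t) (at t within {0..1})" by (rule v_deriv)
      show "((\<lambda>t. (2/a) * exp (a*(t*\<bar>b\<bar> - a)/2)) has_real_derivative
              \<bar>b\<bar> * exp (a*(t*\<bar>b\<bar> - a)/2)) (at t within {0..1})"
        using a_pos by (auto intro!: derivative_eq_intros simp: field_simps)
      have "(t*b)^2 = (t*\<bar>b\<bar>) * (t*\<bar>b\<bar>)" by (simp add: power2_eq_square abs_mult_self_eq)
      also have "\<dots> \<le> a * (t*\<bar>b\<bar>)" using tb[OF t] by (intro mult_right_mono) auto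
      finally have "((t*b)^2 - a^2)/2 \<le> a*(t*\<bar>b\<bar> - a)/2" by (simp add: power2_eq_square field_simps)
      then show "norm (v' t) \<le> \<bar>b\<bar> * exp (a*(t*\<bar>b\<bar> - a)/2)"
        unfolding norm_v' by (intro mult_left_mono) auto
    qed simp
    also have "\<dots> \<le> (2/a) * exp (a*(1*\<bar>b\<bar> - a)/2)" using a_pos by simp
    also have "\<dots> \<le> (2/a) * 1"
      using a_pos assms by (intro mult_left_mono) (auto simp: mult_nonpos_nonneg mult_nonneg_nonpos)
    also have "\<dots> \<le> 2" using False by (simp add: field_simps)
    finally show ?thesis using v_diff by simp
  qed
qed

lemma norm_gauss_primitive_sector_le:
  assumes "\<bar>Im w\<bar> \<le> \<bar>Re w\<bar>"
  shows "norm (gauss_primitive w) \<le> 4"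
proof -
  have right_sector: "norm (gauss_primitive w) \<le> 4" if "\<bar>Im w\<bar> \<le> Re w" for w
  proof -
    have "norm (gauss_primitive w)
        \<le> norm (gauss_primitive (Complex (Re w) (Im w)) - gauss_primitive (complex_of_real (Re w)))
          + norm (gauss_primitive (complex_of_real (Re w)))"
      by (metis complex_surj norm_triangle_sub add.commute)
    also have "\<dots> \<le> 2 + 2"
      using norm_gauss_primitive_vertical_le[OF that] norm_gauss_primitive_of_real_le[of "Re w"] that
      by (intro add_mono) auto
    finally show ?thesis by simp
  qed
  show ?thesis
  proof (cases "Re w \<ge> 0")
    case True
    then show ?thesis using assms right_sector by auto
  next
    case False
    then have "norm (gauss_primitive (- w)) \<le> 4" using assms by (intro right_sector) auto
    then show ?thesis by (simp add: gauss_primitive_minus)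
  qed
qed

lemma norm_Phi_sector_le:
  assumes "\<bar>Im w\<bar> \<le> \<bar>Re w\<bar>"
  shows "norm (Phi w) \<le> 5"
proof -
  have "norm (Phi w) \<le> 1/2 + norm (gauss_primitive w) / sqrt (2*pi)"
    unfolding Phi_eq_gauss_primitive
    by (rule order_trans[OF norm_triangle_ineq]) (simp add: norm_divide)
  also have "norm (gauss_primitive w) / sqrt (2*pi) \<le> norm (gauss_primitive w)"
    using pi_gt3 by (simp add: divide_le_eq mult_le_cancel_left1)
  finally show ?thesis using norm_gauss_primitive_sector_le[OF assms] by simp
qed

definition gauss_density :: "complex \<Rightarrow> complex" where
  "gauss_density w = exp (- (w^2) / 2) / complex_of_real (sqrt (2*pi))"

lemma has_field_derivative_Phi: "(Phi has_field_derivative gauss_density w) (at w)"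
  unfolding Phi_eq_gauss_primitive[abs_def] gauss_density_def
  by (auto intro!: derivative_eq_intros)

lemma Phi_chain [derivative_intros]:
  "(g has_field_derivative g') (at x within s) \<Longrightarrow>
   ((\<lambda>x. Phi (g x)) has_field_derivative gauss_density (g x) * g') (at x within s)"
  by (rule DERIV_chain2[OF has_field_derivative_Phi])

lemma continuous_on_Phi [continuous_intros]:
  "continuous_on S f \<Longrightarrow> continuous_on S (\<lambda>x. Phi (f x))"
proof (rule continuous_on_compose2[of UNIV Phi])
  show "continuous_on UNIV Phi"
    by (meson DERIV_continuous has_field_derivative_Phi continuous_at_imp_continuous_on)
qed auto

lemma continuous_on_gauss_density [continuous_intros]:
  "continuous_on S f \<Longrightarrow> continuous_on S (\<lambda>x. gauss_density (f x))"
  unfolding gauss_density_def by (intro continuous_intros) auto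

lemma Im_csqrt_nonneg: "Im z \<ge> 0 \<Longrightarrow> Im (csqrt z) \<ge> 0"
  using abs_Re_le_cmod[of z] by (auto simp: sgn_if)

lemma csqrt_upper_half_plane:
  assumes "Im z \<ge> 0"
  shows "csqrt z = Complex (sqrt ((cmod z + Re z) / 2)) (sqrt ((cmod z - Re z) / 2))"
  using assms by (auto simp: complex_eq_iff sgn_if)

lemma continuous_on_csqrt_upper_half_plane: "continuous_on {z. Im z \<ge> 0} csqrt"
proof -
  have "continuous_on {z. Im z \<ge> 0}
          (\<lambda>z. Complex (sqrt ((cmod z + Re z) / 2)) (sqrt ((cmod z - Re z) / 2)))"
    unfolding Complex_eq by (intro continuous_intros) auto
  then show ?thesis
    by (rule continuous_on_cong[THEN iffD1, rotated 2]) (auto simp: csqrt_upper_half_plane)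
qed

lemma omega_square: "omega^2 = - 2 * \<i>"
  by (simp add: omega_def power2_eq_square algebra_simps)

lemma omega_neq_0 [simp]: "omega \<noteq> 0"
  by (simp add: omega_def complex_eq_iff)

lemma norm_omega: "norm omega = sqrt 2"
  by (simp add: omega_def cmod_def)

text \<open>For \<open>Im z \<ge> 0\<close> the argument of \<open>csqrt z\<close> lies in \<open>[0, \<pi>/2]\<close>, so multiplying by
  \<open>omega\<close> lands in \<open>[-\<pi>/4, \<pi>/4]\<close>: the whole line \<open>\<real> * csqrt z * omega\<close> stays in the
  double sector where \<open>Phi\<close> is bounded.\<close>
lemma ray_in_sector:
  assumes "Im z \<ge> 0"
  shows "\<bar>Im (complex_of_real m * csqrt z * omega * complex_of_real t)\<bar>
       \<le> \<bar>Re (complex_of_real m * csqrt z * omega * complex_of_real t)\<bar>"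
proof -
  define p where "p = Re (csqrt z)"
  define q where "q = Im (csqrt z)"
  have "p \<ge> 0" "q \<ge> 0"
    using Im_csqrt_nonneg[OF assms] Re_csqrt[of z] by (auto simp: p_def q_def simp del: csqrt.sel)
  then have "\<bar>q - p\<bar> \<le> \<bar>p + q\<bar>" by linarith
  moreover have re: "Re (complex_of_real m * csqrt z * omega * complex_of_real t) = m * t * (p + q)"
    and im: "Im (complex_of_real m * csqrt z * omega * complex_of_real t) = m * t * (q - p)"
    by (simp_all add: omega_def p_def q_def algebra_simps del: csqrt.sel)
  ultimately show ?thesis unfolding re im abs_mult by (intro mult_left_mono) auto
qed

lemma norm_PhiProd_le:
  assumes "Im z \<ge> 0"
  shows "norm (PhiProd d \<mu> J z t) \<le> 5 ^ (d+1)"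
proof -
  have "norm (PhiProd d \<mu> J z t)
      = (\<Prod>j\<in>{0..d} - J. norm (Phi (complex_of_real (\<mu> j) * csqrt z * omega * complex_of_real t)))"
    by (simp add: PhiProd_def prod_norm)
  also have "\<dots> \<le> 5 ^ (d+1)"
  proof (rule prod_le_power)
    have "card ({0..d} - J) \<le> card {0..d}" by (intro card_mono) auto
    then show "card ({0..d} - J) \<le> d + 1" by simp
  qed (auto intro!: norm_Phi_sector_le ray_in_sector assms)
  finally show ?thesis .
qed

lemma continuous_on_PhiProd [continuous_intros]:
  "continuous_on S g \<Longrightarrow> continuous_on S (\<lambda>x. PhiProd d \<mu> J z (g x))"
  unfolding PhiProd_def by (intro continuous_intros) auto

lemma norm_exp_omega_square [simp]: "norm (exp (- (omega^2 * complex_of_real x) / 2)) = 1"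
  by (simp add: omega_square)

lemma norm_exp_omega_square_mult_le:
  assumes "x \<ge> 0" "Im c \<ge> 0"
  shows "norm (exp (- (omega^2 * complex_of_real x / 2) * c)) \<le> 1"
proof -
  have "Re (- (omega^2 * complex_of_real x / 2) * c) = - (x * Im c)"
    by (simp add: omega_square algebra_simps)
  then show ?thesis using assms by simp
qed

section \<open>Integration by parts along the ray\<close>

lemma of_real_sqrt_2pi_square:
  "complex_of_real (sqrt (2*pi)) * complex_of_real (sqrt (2*pi)) = complex_of_real (2*pi)"
  by (simp flip: of_real_mult)

context
  fixes d :: nat and \<mu> :: "nat \<Rightarrow> real" and z :: complex
begin

definition ray_coeff :: "nat \<Rightarrow> complex" where
  "ray_coeff j = complex_of_real (\<mu> j) * csqrt z * omega"

definition PhiProdC :: "nat set \<Rightarrow> complex \<Rightarrow> complex" where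
  "PhiProdC J w = (\<Prod>j\<in>{0..d} - J. Phi (ray_coeff j * w))"

definition decay :: "nat \<Rightarrow> complex" where
  "decay l = 1 + complex_of_real ((\<mu> l)^2) * z"

definition gauss0 :: "complex \<Rightarrow> complex" where
  "gauss0 w = exp (- (omega^2 * w^2) / 2)"

definition gauss1 :: "nat \<Rightarrow> complex \<Rightarrow> complex" where
  "gauss1 l w = exp (- (omega^2 * w^2 / 2) * decay l)"

definition gauss2 :: "nat \<Rightarrow> nat \<Rightarrow> complex \<Rightarrow> complex" where
  "gauss2 l1 l2 w = exp (- (omega^2 * w^2 / 2)
     * (1 + complex_of_real ((\<mu> l1)^2) * z + complex_of_real ((\<mu> l2)^2) * z))"

definition coeff1 :: "nat \<Rightarrow> complex" where
  "coeff1 l = complex_of_real (\<mu> l) * csqrt z / (complex_of_real (sqrt (2*pi)) * omega^2 * decay l)"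

definition coeff2 :: "nat \<Rightarrow> nat \<Rightarrow> complex" where
  "coeff2 l1 l2 = complex_of_real (\<mu> l1 * \<mu> l2) * z / (complex_of_real (4 * pi) * omega * decay l1)"

definition boundary_term :: "complex \<Rightarrow> complex" where
  "boundary_term w = 1/(w * omega) * PhiProdC {} w * gauss0 w
     + (\<Sum>l\<in>{0..d}. coeff1 l * PhiProdC {l} w * (1/w^2) * gauss1 l w)"

definition tail_integrandC :: "complex \<Rightarrow> complex" where
  "tail_integrandC w = - 1/(2 * omega) * (PhiProdC {} w * gauss0 w / w^3)
     - (\<Sum>l\<in>{0..d}. coeff1 l * (PhiProdC {l} w * (1/w^4) * gauss1 l w))
     + (\<Sum>l1\<in>{0..d}. \<Sum>l2\<in>{0..d} - {l1}. coeff2 l1 l2 * (PhiProdC {l1, l2} w / w^3 * gauss2 l1 l2 w))"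

lemma PhiProd_eq_PhiProdC: "PhiProd d \<mu> J z t = PhiProdC J (complex_of_real t)"
  by (simp add: PhiProd_def PhiProdC_def ray_coeff_def)

lemma has_field_derivative_PhiProdC:
  "(PhiProdC J has_field_derivative
     (\<Sum>l\<in>{0..d} - J. gauss_density (ray_coeff l * w) * ray_coeff l * PhiProdC (insert l J) w)) (at w)"
proof -
  have "((\<lambda>u. \<Prod>j\<in>{0..d} - J. Phi (ray_coeff j * u)) has_field_derivative
         (\<Sum>l\<in>{0..d} - J. gauss_density (ray_coeff l * w) * ray_coeff l
            * (\<Prod>j\<in>{0..d} - J - {l}. Phi (ray_coeff j * w)))) (at w)"
    by (rule has_field_derivative_prod) (auto intro!: derivative_eq_intros)
  then show ?thesis unfolding PhiProdC_def[abs_def] by (simp add: Diff_insert[symmetric])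
qed

lemma ray_coeff_mult_square:
  "(ray_coeff l * w)^2 = complex_of_real ((\<mu> l)^2) * z * omega^2 * w^2"
  by (simp add: ray_coeff_def power_mult_distrib)

lemma gauss_density_mult_gauss0:
  "gauss_density (ray_coeff l * w) * gauss0 w = gauss1 l w / complex_of_real (sqrt (2*pi))"
proof -
  have "- ((ray_coeff l * w)^2) / 2 + - (omega^2 * w^2) / 2 = - (omega^2 * w^2 / 2) * decay l"
    unfolding ray_coeff_mult_square decay_def by (simp add: algebra_simps)
  then show ?thesis unfolding gauss_density_def gauss0_def gauss1_def
    by (simp add: exp_add[symmetric])
qed

lemma gauss_density_mult_gauss1:
  "gauss_density (ray_coeff l2 * w) * gauss1 l1 w = gauss2 l1 l2 w / complex_of_real (sqrt (2*pi))"
proof -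
  have "- ((ray_coeff l2 * w)^2) / 2 + - (omega^2 * w^2 / 2) * decay l1 =
     - (omega^2 * w^2 / 2) * (1 + complex_of_real ((\<mu> l1)^2) * z + complex_of_real ((\<mu> l2)^2) * z)"
    unfolding ray_coeff_mult_square decay_def by (simp add: algebra_simps)
  then show ?thesis unfolding gauss_density_def gauss2_def gauss1_def
    by (simp add: exp_add[symmetric])
qed

lemma has_field_derivative_gauss0:
  "(gauss0 has_field_derivative (- (omega^2 * w) * gauss0 w)) (at w)"
  unfolding gauss0_def[abs_def] by (auto intro!: derivative_eq_intros simp: algebra_simps)

lemma has_field_derivative_gauss1:
  "(gauss1 l has_field_derivative (- (omega^2 * w * decay l) * gauss1 l w)) (at w)"
  unfolding gauss1_def[abs_def] by (auto intro!: derivative_eq_intros simp: algebra_simps)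

lemma ray_coeff_eq_coeff1:
  assumes "decay l \<noteq> 0"
  shows "ray_coeff l / (omega * complex_of_real (sqrt (2*pi))) = coeff1 l * omega^2 * decay l"
  using assms by (simp add: ray_coeff_def coeff1_def field_simps power2_eq_square)

lemma coeff1_mult_ray_coeff:
  assumes "decay l \<noteq> 0"
  shows "coeff1 l * ray_coeff l2 / complex_of_real (sqrt (2*pi)) = 2 * coeff2 l l2"
proof -
  have "coeff1 l * ray_coeff l2 / complex_of_real (sqrt (2*pi))
      = complex_of_real (\<mu> l) * complex_of_real (\<mu> l2) * (csqrt z * csqrt z) * omega /
        ((complex_of_real (sqrt (2*pi)) * complex_of_real (sqrt (2*pi))) * omega^2 * decay l)"
    by (simp add: ray_coeff_def coeff1_def field_simps)
  also have "\<dots> = complex_of_real (\<mu> l) * complex_of_real (\<mu> l2) * z * omega /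
        (complex_of_real (2*pi) * omega^2 * decay l)"
    unfolding of_real_sqrt_2pi_square by (simp flip: power2_eq_square)
  also have "\<dots> = 2 * coeff2 l l2" using assms pi_gt_zero
    by (simp add: coeff2_def field_simps power2_eq_square)
  finally show ?thesis .
qed

lemma has_field_derivative_boundary_main:
  assumes "w \<noteq> 0" "\<And>l. l \<in> {0..d} \<Longrightarrow> decay l \<noteq> 0"
  shows "((\<lambda>w. 1/(w * omega) * PhiProdC {} w * gauss0 w) has_field_derivative
     - (PhiProdC {} w * gauss0 w) / (w^2 * omega)
     + (\<Sum>l\<in>{0..d}. coeff1 l * omega^2 * decay l * PhiProdC {l} w * gauss1 l w) / w
     - omega * PhiProdC {} w * gauss0 w) (at w)"
proof -
  define P' where "P' = (\<Sum>l\<in>{0..d} - {}. gauss_density (ray_coeff l * w) * ray_coeff l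
                           * PhiProdC (insert l {}) w)"
  have "((\<lambda>w. 1/(w * omega)) has_field_derivative -1/(w^2 * omega)) (at w)"
    using assms by (auto intro!: derivative_eq_intros simp: field_simps power2_eq_square)
  then have deriv: "((\<lambda>w. 1/(w * omega) * PhiProdC {} w * gauss0 w) has_field_derivative
      (-1/(w^2 * omega) * PhiProdC {} w + P' * (1/(w * omega))) * gauss0 w
      + (- (omega^2 * w) * gauss0 w) * (1/(w * omega) * PhiProdC {} w)) (at w)"
    unfolding P'_def by (intro DERIV_mult has_field_derivative_gauss0 has_field_derivative_PhiProdC)
  have "P' * gauss0 w / omega = (\<Sum>l\<in>{0..d}. coeff1 l * omega^2 * decay l * PhiProdC {l} w * gauss1 l w)"
    unfolding P'_def sum_distrib_right sum_divide_distrib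
  proof (rule sum.cong)
    fix l assume l: "l \<in> {0..d}"
    have "gauss_density (ray_coeff l * w) * ray_coeff l * PhiProdC (insert l {}) w * gauss0 w / omega
       = (ray_coeff l / (omega * complex_of_real (sqrt (2*pi)))) * PhiProdC {l} w * gauss1 l w"
      using gauss_density_mult_gauss0[of l w] by (simp add: field_simps)
    also have "\<dots> = coeff1 l * omega^2 * decay l * PhiProdC {l} w * gauss1 l w"
      by (simp add: ray_coeff_eq_coeff1[OF assms(2)[OF l]])
    finally show "gauss_density (ray_coeff l * w) * ray_coeff l * PhiProdC (insert l {}) w
                    * gauss0 w / omega = \<dots>" .
  qed simp
  then have "(-1/(w^2 * omega) * PhiProdC {} w + P' * (1/(w * omega))) * gauss0 w
      + (- (omega^2 * w) * gauss0 w) * (1/(w * omega) * PhiProdC {} w)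
    = - (PhiProdC {} w * gauss0 w) / (w^2 * omega)
      + (\<Sum>l\<in>{0..d}. coeff1 l * omega^2 * decay l * PhiProdC {l} w * gauss1 l w) / w
      - omega * PhiProdC {} w * gauss0 w"
    using assms(1) by (simp add: field_simps power2_eq_square)
  with deriv show ?thesis by simp
qed

lemma has_field_derivative_boundary_decay:
  assumes "w \<noteq> 0" "decay l \<noteq> 0"
  shows "((\<lambda>w. coeff1 l * PhiProdC {l} w * (1/w^2) * gauss1 l w) has_field_derivative
     (\<Sum>l2\<in>{0..d} - {l}. 2 * coeff2 l l2 * PhiProdC {l, l2} w * gauss2 l l2 w) / w^2
     - 2 * coeff1 l * PhiProdC {l} w * gauss1 l w / w^3
     - coeff1 l * omega^2 * decay l * PhiProdC {l} w * gauss1 l w / w) (at w)"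
proof -
  define P' where "P' = (\<Sum>l2\<in>{0..d} - {l}. gauss_density (ray_coeff l2 * w) * ray_coeff l2
                            * PhiProdC (insert l2 {l}) w)"
  have "((\<lambda>w. coeff1 l * PhiProdC {l} w) has_field_derivative coeff1 l * P') (at w)"
    unfolding P'_def by (intro DERIV_cmult has_field_derivative_PhiProdC)
  moreover have "((\<lambda>w. 1/w^2) has_field_derivative -2/w^3) (at w)"
    using assms by (auto intro!: derivative_eq_intros simp: field_simps power2_eq_square power3_eq_cube)
  ultimately have deriv: "((\<lambda>w. coeff1 l * PhiProdC {l} w * (1/w^2) * gauss1 l w) has_field_derivative
      ((coeff1 l * P') * (1/w^2) + (-2/w^3) * (coeff1 l * PhiProdC {l} w)) * gauss1 l w
       + (- (omega^2 * w * decay l) * gauss1 l w) * (coeff1 l * PhiProdC {l} w * (1/w^2))) (at w)"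
    by (intro DERIV_mult has_field_derivative_gauss1)
  have "coeff1 l * P' * gauss1 l w
      = (\<Sum>l2\<in>{0..d} - {l}. (coeff1 l * ray_coeff l2 / complex_of_real (sqrt (2*pi)))
                              * PhiProdC (insert l2 {l}) w * gauss2 l l2 w)"
    unfolding P'_def sum_distrib_left sum_distrib_right
  proof (rule sum.cong[OF refl])
    fix l2
    have "coeff1 l * (gauss_density (ray_coeff l2 * w) * ray_coeff l2 * PhiProdC (insert l2 {l}) w)
            * gauss1 l w
        = coeff1 l * ray_coeff l2 * PhiProdC (insert l2 {l}) w
            * (gauss_density (ray_coeff l2 * w) * gauss1 l w)"
      by (simp add: ac_simps)
    then show "coeff1 l * (gauss_density (ray_coeff l2 * w) * ray_coeff l2 * PhiProdC (insert l2 {l}) w)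
            * gauss1 l w
        = (coeff1 l * ray_coeff l2 / complex_of_real (sqrt (2*pi)))
            * PhiProdC (insert l2 {l}) w * gauss2 l l2 w"
      unfolding gauss_density_mult_gauss1 by (simp add: field_simps)
  qed
  also have "\<dots> = (\<Sum>l2\<in>{0..d} - {l}. 2 * coeff2 l l2 * PhiProdC {l, l2} w * gauss2 l l2 w)"
    by (intro sum.cong refl) (simp add: coeff1_mult_ray_coeff[OF assms(2)] insert_commute)
  finally have "((coeff1 l * P') * (1/w^2) + (-2/w^3) * (coeff1 l * PhiProdC {l} w)) * gauss1 l w
       + (- (omega^2 * w * decay l) * gauss1 l w) * (coeff1 l * PhiProdC {l} w * (1/w^2))
     = (\<Sum>l2\<in>{0..d} - {l}. 2 * coeff2 l l2 * PhiProdC {l, l2} w * gauss2 l l2 w) / w^2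
       - 2 * coeff1 l * PhiProdC {l} w * gauss1 l w / w^3
       - coeff1 l * omega^2 * decay l * PhiProdC {l} w * gauss1 l w / w"
    using assms(1) by (simp add: field_simps power2_eq_square power3_eq_cube)
  with deriv show ?thesis by simp
qed

lemma has_field_derivative_boundary_term:
  assumes "w \<noteq> 0" "\<And>l. l \<in> {0..d} \<Longrightarrow> decay l \<noteq> 0"
  shows "(boundary_term has_field_derivative
           2 * w * tail_integrandC w - omega * PhiProdC {} w * gauss0 w) (at w)"
proof -
  define A where "A = (\<Sum>l\<in>{0..d}. \<Sum>l2\<in>{0..d} - {l}.
                         2 * coeff2 l l2 * PhiProdC {l, l2} w * gauss2 l l2 w)"
  define B where "B = (\<Sum>l\<in>{0..d}. 2 * coeff1 l * PhiProdC {l} w * gauss1 l w)"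
  define C where "C = (\<Sum>l\<in>{0..d}. coeff1 l * omega^2 * decay l * PhiProdC {l} w * gauss1 l w)"
  have deriv: "(boundary_term has_field_derivative
          (- (PhiProdC {} w * gauss0 w) / (w^2 * omega) + C / w - omega * PhiProdC {} w * gauss0 w)
          + (\<Sum>l\<in>{0..d}.
              (\<Sum>l2\<in>{0..d} - {l}. 2 * coeff2 l l2 * PhiProdC {l, l2} w * gauss2 l l2 w) / w^2
              - 2 * coeff1 l * PhiProdC {l} w * gauss1 l w / w^3
              - coeff1 l * omega^2 * decay l * PhiProdC {l} w * gauss1 l w / w)) (at w)"
    unfolding boundary_term_def[abs_def] C_def
    by (intro DERIV_add has_field_derivative_boundary_main DERIV_sum
          has_field_derivative_boundary_decay assms) auto
  have sum_decay: "(\<Sum>l\<in>{0..d}.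
              (\<Sum>l2\<in>{0..d} - {l}. 2 * coeff2 l l2 * PhiProdC {l, l2} w * gauss2 l l2 w) / w^2
              - 2 * coeff1 l * PhiProdC {l} w * gauss1 l w / w^3
              - coeff1 l * omega^2 * decay l * PhiProdC {l} w * gauss1 l w / w)
      = A / w^2 - B / w^3 - C / w"
    unfolding A_def B_def C_def sum_subtractf sum_divide_distrib ..
  have B: "2*w*(\<Sum>l\<in>{0..d}. coeff1 l * (PhiProdC {l} w * (1/w^4) * gauss1 l w)) = B / w^3"
    unfolding B_def sum_distrib_left sum_divide_distrib
    by (rule sum.cong)
       (use assms(1) in \<open>auto simp: field_simps power2_eq_square power3_eq_cube power4_eq_xxxx\<close>)
  have A: "2*w*(\<Sum>l1\<in>{0..d}. \<Sum>l2\<in>{0..d} - {l1}.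
              coeff2 l1 l2 * (PhiProdC {l1, l2} w / w^3 * gauss2 l1 l2 w)) = A / w^2"
    unfolding A_def sum_distrib_left sum_divide_distrib
    by (intro sum.cong refl) (use assms(1) in \<open>auto simp: field_simps power2_eq_square power3_eq_cube\<close>)
  have derivative_eq: "(- (PhiProdC {} w * gauss0 w) / (w^2 * omega) + C / w - omega * PhiProdC {} w * gauss0 w)
          + (A / w^2 - B / w^3 - C / w)
        = 2 * w * tail_integrandC w - omega * PhiProdC {} w * gauss0 w"
    unfolding tail_integrandC_def right_diff_distrib distrib_left A B
    using assms(1) by (simp add: field_simps power2_eq_square power3_eq_cube)
  show ?thesis using deriv unfolding sum_decay derivative_eq .
qed

end

section \<open>Tail integrals\<close>

definition tail0 :: "nat \<Rightarrow> (nat \<Rightarrow> real) \<Rightarrow> complex \<Rightarrow> real \<Rightarrow> complex" where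
  "tail0 d \<mu> z x = PhiProd d \<mu> {} z (sqrt x) * exp (- (omega^2 * complex_of_real x) / 2)
                     / complex_of_real (x powr (3/2))"

definition tail1 :: "nat \<Rightarrow> (nat \<Rightarrow> real) \<Rightarrow> complex \<Rightarrow> nat \<Rightarrow> real \<Rightarrow> complex" where
  "tail1 d \<mu> z l x = PhiProd d \<mu> {l} z (sqrt x) * complex_of_real (1 / x^2)
                       * exp (- (omega^2 * complex_of_real x / 2) * (1 + complex_of_real ((\<mu> l)^2) * z))"

definition tail2 :: "nat \<Rightarrow> (nat \<Rightarrow> real) \<Rightarrow> complex \<Rightarrow> nat \<Rightarrow> nat \<Rightarrow> real \<Rightarrow> complex" where
  "tail2 d \<mu> z l1 l2 x = PhiProd d \<mu> {l1, l2} z (sqrt x) / complex_of_real (x powr (3/2))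
     * exp (- (omega^2 * complex_of_real x / 2)
            * (1 + complex_of_real ((\<mu> l1)^2) * z + complex_of_real ((\<mu> l2)^2) * z))"

definition tail_integrand :: "nat \<Rightarrow> (nat \<Rightarrow> real) \<Rightarrow> complex \<Rightarrow> real \<Rightarrow> complex" where
  "tail_integrand d \<mu> z x = - 1 / (2 * omega) * tail0 d \<mu> z x
     - (\<Sum>l\<in>{0..d}. coeff1 \<mu> z l * tail1 d \<mu> z l x)
     + (\<Sum>l1\<in>{0..d}. \<Sum>l2\<in>{0..d} - {l1}. coeff2 \<mu> z l1 l2 * tail2 d \<mu> z l1 l2 x)"

definition tail_integral :: "nat \<Rightarrow> (nat \<Rightarrow> real) \<Rightarrow> complex \<Rightarrow> real \<Rightarrow> complex" where
  "tail_integral d \<mu> z a = - 1 / (2 * omega) * integral {a..} (tail0 d \<mu> z)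
     - (\<Sum>l\<in>{0..d}. coeff1 \<mu> z l * integral {a..} (tail1 d \<mu> z l))
     + (\<Sum>l1\<in>{0..d}. \<Sum>l2\<in>{0..d} - {l1}. coeff2 \<mu> z l1 l2 * integral {a..} (tail2 d \<mu> z l1 l2))"

lemma continuous_on_tails:
  "continuous_on {0<..} (tail0 d \<mu> z)"
  "continuous_on {0<..} (tail1 d \<mu> z l)"
  "continuous_on {0<..} (tail2 d \<mu> z l1 l2)"
  unfolding tail0_def[abs_def] tail1_def[abs_def] tail2_def[abs_def]
  by (intro continuous_intros; auto)+

lemma continuous_on_tail_integrand: "continuous_on {0<..} (tail_integrand d \<mu> z)"
  unfolding tail_integrand_def[abs_def] by (intro continuous_intros continuous_on_tails)

lemma absolutely_integrable_on_atLeast_by_majorant: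
  fixes f :: "real \<Rightarrow> 'a::euclidean_space"
  assumes cont: "continuous_on {a..} f"
    and le: "\<And>x. x \<ge> a \<Longrightarrow> norm (f x) \<le> M * g x"
    and g: "(g has_integral I) {a..}"
  shows "f absolutely_integrable_on {a..}" "norm (integral {a..} f) \<le> M * I"
proof -
  have Mg: "((\<lambda>x. M * g x) has_integral M * I) {a..}" using g by (rule has_integral_mult_right)
  show integrable: "f absolutely_integrable_on {a..}"
    by (rule measurable_bounded_by_integrable_imp_absolutely_integrable[OF
          continuous_imp_measurable_on_sets_lebesgue[OF cont]]) (use Mg le in auto)
  have "norm (integral {a..} f) \<le> integral {a..} (\<lambda>x. M * g x)"
    by (rule integral_norm_bound_integral)
       (use integrable Mg le in \<open>auto simp: absolutely_integrable_on_def\<close>)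
  also have "\<dots> = M * I" by (rule integral_unique[OF Mg])
  finally show "norm (integral {a..} f) \<le> M * I" .
qed

lemma norm_tail0_le:
  assumes "Im z \<ge> 0" "x > 0"
  shows "norm (tail0 d \<mu> z x) \<le> 5^(d+1) * x powr (-3/2)"
proof -
  have "norm (complex_of_real (x powr (3/2))) = x powr (3/2)" by (simp only: norm_of_real) simp
  then have "norm (tail0 d \<mu> z x) = norm (PhiProd d \<mu> {} z (sqrt x)) * x powr (-3/2)"
    unfolding tail0_def norm_mult norm_divide norm_exp_omega_square
    by (simp add: powr_minus_divide)
  also have "\<dots> \<le> 5^(d+1) * x powr (-3/2)"
    by (intro mult_right_mono norm_PhiProd_le assms) auto
  finally show ?thesis .
qed

lemma norm_tail1_le:
  assumes "Im z \<ge> 0" "x > 0"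
  shows "norm (tail1 d \<mu> z l x) \<le> 5^(d+1) * (1 / x^2)"
proof -
  have exp_le: "norm (exp (- (omega^2 * complex_of_real x / 2) * (1 + complex_of_real ((\<mu> l)^2) * z))) \<le> 1"
    using assms by (intro norm_exp_omega_square_mult_le) auto
  have norm_inverse: "norm (complex_of_real (1 / x^2)) = 1 / x^2" by (simp add: norm_divide norm_power)
  have "norm (tail1 d \<mu> z l x) \<le> norm (PhiProd d \<mu> {l} z (sqrt x)) * (1/x^2) * 1"
    unfolding tail1_def norm_mult norm_inverse by (intro mult_left_mono exp_le) auto
  also have "\<dots> \<le> 5^(d+1) * (1 / x^2)"
    unfolding mult_1_right by (intro mult_right_mono norm_PhiProd_le assms) auto
  finally show ?thesis .
qed

lemma norm_tail2_le:
  assumes "Im z \<ge> 0" "x > 0"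
  shows "norm (tail2 d \<mu> z l1 l2 x) \<le> 5^(d+1) * x powr (-3/2)"
proof -
  have exp_le: "norm (exp (- (omega^2 * complex_of_real x / 2)
           * (1 + complex_of_real ((\<mu> l1)^2) * z + complex_of_real ((\<mu> l2)^2) * z))) \<le> 1"
    using assms by (intro norm_exp_omega_square_mult_le) auto
  have norm_powr: "norm (complex_of_real (x powr (3/2))) = x powr (3/2)"
    by (simp only: norm_of_real) simp
  have "norm (tail2 d \<mu> z l1 l2 x) \<le> norm (PhiProd d \<mu> {l1, l2} z (sqrt x)) / x powr (3/2) * 1"
    unfolding tail2_def norm_mult norm_divide norm_powr by (intro mult_left_mono exp_le) auto
  also have "\<dots> \<le> 5^(d+1) * x powr (-3/2)"
    using norm_PhiProd_le[OF assms(1), of d \<mu> "{l1, l2}" "sqrt x"]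
    by (simp add: divide_right_mono powr_minus_divide)
  finally show ?thesis .
qed

lemma has_integral_powr_three_halves_to_inf:
  "a > (0::real) \<Longrightarrow> ((\<lambda>x. x powr (-3/2)) has_integral 2 * a powr (-1/2)) {a..}"
  using has_integral_powr_to_inf[of "-3/2" a] by (simp add: mult.commute)

lemma has_integral_inverse_square_to_inf:
  "a > (0::real) \<Longrightarrow> ((\<lambda>x::real. 1 / x^2) has_integral 1 / a) {a..}"
  using has_integral_inverse_power_to_inf[of 2 a] by simp

lemma
  assumes "Im z \<ge> 0" "a > 0"
  shows absolutely_integrable_tail0: "tail0 d \<mu> z absolutely_integrable_on {a..}"
    and norm_integral_tail0_le: "norm (integral {a..} (tail0 d \<mu> z)) \<le> 5^(d+1) * (2 * a powr (-1/2))"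
    and absolutely_integrable_tail1: "tail1 d \<mu> z l absolutely_integrable_on {a..}"
    and norm_integral_tail1_le: "norm (integral {a..} (tail1 d \<mu> z l)) \<le> 5^(d+1) * (1 / a)"
    and absolutely_integrable_tail2: "tail2 d \<mu> z l1 l2 absolutely_integrable_on {a..}"
    and norm_integral_tail2_le:
      "norm (integral {a..} (tail2 d \<mu> z l1 l2)) \<le> 5^(d+1) * (2 * a powr (-1/2))"
proof -
  have sub: "{a..} \<subseteq> {0<..}" using assms(2) by auto
  note majorant = absolutely_integrable_on_atLeast_by_majorant[OF
      continuous_on_subset[OF continuous_on_tails(1) sub] norm_tail0_le[OF assms(1)]
      has_integral_powr_three_halves_to_inf[OF assms(2)]]
    absolutely_integrable_on_atLeast_by_majorant[OF
      continuous_on_subset[OF continuous_on_tails(2) sub] norm_tail1_le[OF assms(1)]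
      has_integral_inverse_square_to_inf[OF assms(2)]]
    absolutely_integrable_on_atLeast_by_majorant[OF
      continuous_on_subset[OF continuous_on_tails(3) sub] norm_tail2_le[OF assms(1)]
      has_integral_powr_three_halves_to_inf[OF assms(2)]]
  show "tail0 d \<mu> z absolutely_integrable_on {a..}"
    "norm (integral {a..} (tail0 d \<mu> z)) \<le> 5^(d+1) * (2 * a powr (-1/2))"
    "tail1 d \<mu> z l absolutely_integrable_on {a..}"
    "norm (integral {a..} (tail1 d \<mu> z l)) \<le> 5^(d+1) * (1 / a)"
    "tail2 d \<mu> z l1 l2 absolutely_integrable_on {a..}"
    "norm (integral {a..} (tail2 d \<mu> z l1 l2)) \<le> 5^(d+1) * (2 * a powr (-1/2))"
    using majorant assms(2) by auto
qed

section \<open>The representation formula\<close>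

lemma powr_three_halves_square:
  assumes "t > 0"
  shows "(t^2) powr (3/2) = (t::real)^3"
proof -
  have "(t^2) powr (3/2) = (t powr 2) powr (3/2)"
    using assms by (subst powr_realpow[of t 2, symmetric]) auto
  also have "\<dots> = t powr 3" by (simp add: powr_powr)
  also have "\<dots> = t^3" using assms by (subst powr_realpow[of t 3, symmetric]) auto
  finally show ?thesis .
qed

lemma continuous_on_Iintegrand: "continuous_on S (Iintegrand d \<mu> z)"
  unfolding Iintegrand_def[abs_def] by (intro continuous_intros) auto

lemma integrable_Iintegrand: "Iintegrand d \<mu> z integrable_on {0..B}"
  by (intro integrable_continuous_interval continuous_on_Iintegrand)

lemma Iintegrand_eq_PhiProdC:
  "Iintegrand d \<mu> z t = PhiProdC d \<mu> z {} (complex_of_real t) * gauss0 (complex_of_real t) * omega"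
  by (simp add: Iintegrand_def PhiProd_eq_PhiProdC gauss0_def)

lemma tail_integrand_square:
  assumes "t > 0"
  shows "tail_integrand d \<mu> z (t^2) = tail_integrandC d \<mu> z (complex_of_real t)"
  using assms
  by (simp add: tail_integrand_def tail_integrandC_def tail0_def tail1_def tail2_def
      PhiProd_eq_PhiProdC gauss0_def gauss1_def gauss2_def decay_def powr_three_halves_square)

lemma has_vector_derivative_integral_upto_square:
  fixes g :: "real \<Rightarrow> 'a::banach"
  assumes "continuous_on {A^2..B^2} g" "0 \<le> A" "t \<in> {A..B}"
  shows "((\<lambda>t. integral {A^2..t^2} g) has_vector_derivative (2*t) *\<^sub>R g (t^2)) (at t within {A..B})"
proof -
  have square: "((\<lambda>t::real. t^2) has_vector_derivative 2 * t) (at t within {A..B})"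
    by (auto intro!: derivative_eq_intros simp flip: has_real_derivative_iff_has_vector_derivative)
  have "((\<lambda>u. integral {A^2..u} g) has_vector_derivative g (t^2)) (at (t^2) within (\<lambda>t. t^2) ` {A..B})"
    using assms
    by (intro has_vector_derivative_within_subset[OF integral_has_vector_derivative[OF assms(1)]])
       (auto intro: power_mono)
  from vector_diff_chain_within[OF square this] show ?thesis by (simp add: o_def)
qed

lemma ray_integration_by_parts:
  assumes "0 < A" "A \<le> B" and decay: "\<And>l. l \<in> {0..d} \<Longrightarrow> decay \<mu> z l \<noteq> 0"
  shows "integral {0..B} (Iintegrand d \<mu> z) + boundary_term d \<mu> z (complex_of_real B)
           - integral {A^2..B^2} (tail_integrand d \<mu> z)
       = integral {0..A} (Iintegrand d \<mu> z) + boundary_term d \<mu> z (complex_of_real A)"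
proof -
  define Q where "Q = (\<lambda>t. integral {0..t} (Iintegrand d \<mu> z) + boundary_term d \<mu> z (complex_of_real t)
                             - integral {A^2..t^2} (tail_integrand d \<mu> z))"
  have zero_derivative: "(Q has_vector_derivative 0) (at t within {A..B})" if t: "t \<in> {A..B}" for t
  proof -
    have t_pos: "t > 0" using t assms by auto
    have "continuous_on {A^2..B^2} (tail_integrand d \<mu> z)"
      using assms(1)
      by (intro continuous_on_subset[OF continuous_on_tail_integrand])
         (auto intro: less_le_trans[of 0 "A^2"])
    then have "((\<lambda>t. integral {A^2..t^2} (tail_integrand d \<mu> z)) has_vector_derivative
                 (2*t) *\<^sub>R tail_integrand d \<mu> z (t^2)) (at t within {A..B})"
      using assms(1) t by (intro has_vector_derivative_integral_upto_square) auto
    moreover have "((\<lambda>t. integral {0..t} (Iintegrand d \<mu> z)) has_vector_derivative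
                      Iintegrand d \<mu> z t) (at t within {A..B})"
      using t assms(1)
      by (intro has_vector_derivative_within_subset[OF
            integral_has_vector_derivative[OF continuous_on_Iintegrand]]) auto
    moreover have "((\<lambda>t. boundary_term d \<mu> z (complex_of_real t)) has_vector_derivative
        2 * of_real t * tail_integrandC d \<mu> z (of_real t)
        - omega * PhiProdC d \<mu> z {} (of_real t) * gauss0 (of_real t)) (at t within {A..B})"
      using t_pos decay by (intro has_vector_derivative_real_field has_field_derivative_boundary_term) auto
    ultimately have "(Q has_vector_derivative Iintegrand d \<mu> z t
        + (2 * of_real t * tail_integrandC d \<mu> z (of_real t)
           - omega * PhiProdC d \<mu> z {} (of_real t) * gauss0 (of_real t))
        - (2*t) *\<^sub>R tail_integrand d \<mu> z (t^2)) (at t within {A..B})"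
      unfolding Q_def by (intro derivative_intros)
    then show ?thesis
      by (simp add: Iintegrand_eq_PhiProdC tail_integrand_square[OF t_pos] scaleR_conv_of_real)
  qed
  obtain c where "\<And>t. t \<in> {A..B} \<Longrightarrow> Q t = c"
    using has_vector_derivative_zero_constant[OF convex_closed_interval zero_derivative] by blast
  then have "Q B = Q A" using assms(1,2) by simp
  then show ?thesis by (simp add: Q_def)
qed

lemma has_integral_interval_as_tail_difference:
  fixes f :: "real \<Rightarrow> complex"
  assumes "continuous_on {a..b} f" "f absolutely_integrable_on {b..}" "a \<le> b"
  shows "(f has_integral (integral {a..} f - integral {b..} f)) {a..b}"
proof -
  have f_ab: "f integrable_on {a..b}" using assms(1) by (rule integrable_continuous_interval)
  have "(f has_integral (integral {a..b} f + integral {b..} f)) ({a..b} \<union> {b..})"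
    using f_ab assms(2)
    by (intro has_integral_Un)
       (auto simp: absolutely_integrable_on_def intro: negligible_subset[OF negligible_sing[of b]])
  moreover have "{a..b} \<union> {b..} = {a..}" using assms(3) by auto
  ultimately have "integral {a..} f = integral {a..b} f + integral {b..} f"
    by (simp add: integral_unique)
  then show ?thesis using f_ab by (simp add: has_integral_integral)
qed

lemma has_integral_tail_integrand:
  assumes "Im z \<ge> 0" "0 < a" "a \<le> b"
  shows "(tail_integrand d \<mu> z has_integral (tail_integral d \<mu> z a - tail_integral d \<mu> z b)) {a..b}"
proof -
  have b: "0 < b" and sub: "{a..b} \<subseteq> {0<..}" using assms by auto
  note difference = has_integral_interval_as_tail_difference[OF continuous_on_subset[OF _ sub] _ assms(3)]
  have i0: "(tail0 d \<mu> z has_integral (integral {a..} (tail0 d \<mu> z) - integral {b..} (tail0 d \<mu> z))) {a..b}"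
    by (rule difference[OF continuous_on_tails(1) absolutely_integrable_tail0[OF assms(1) b]])
  have i1: "(tail1 d \<mu> z l has_integral
              (integral {a..} (tail1 d \<mu> z l) - integral {b..} (tail1 d \<mu> z l))) {a..b}" for l
    by (rule difference[OF continuous_on_tails(2) absolutely_integrable_tail1[OF assms(1) b]])
  have i2: "(tail2 d \<mu> z l1 l2 has_integral
              (integral {a..} (tail2 d \<mu> z l1 l2) - integral {b..} (tail2 d \<mu> z l1 l2))) {a..b}" for l1 l2
    by (rule difference[OF continuous_on_tails(3) absolutely_integrable_tail2[OF assms(1) b]])
  have "(tail_integrand d \<mu> z has_integral
     (- 1 / (2 * omega) * (integral {a..} (tail0 d \<mu> z) - integral {b..} (tail0 d \<mu> z))
     - (\<Sum>l\<in>{0..d}. coeff1 \<mu> z l * (integral {a..} (tail1 d \<mu> z l) - integral {b..} (tail1 d \<mu> z l)))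
     + (\<Sum>l1\<in>{0..d}. \<Sum>l2\<in>{0..d} - {l1}. coeff2 \<mu> z l1 l2
          * (integral {a..} (tail2 d \<mu> z l1 l2) - integral {b..} (tail2 d \<mu> z l1 l2))))) {a..b}"
    unfolding tail_integrand_def[abs_def]
    by (intro has_integral_diff has_integral_add has_integral_mult_right has_integral_sum i0 i1 i2) auto
  then show ?thesis
    unfolding tail_integral_def right_diff_distrib sum_subtractf by (simp add: algebra_simps)
qed

definition ray_rhs :: "nat \<Rightarrow> (nat \<Rightarrow> real) \<Rightarrow> complex \<Rightarrow> real \<Rightarrow> complex" where
  "ray_rhs d \<mu> z A = integral {0..A} (Iintegrand d \<mu> z) + boundary_term d \<mu> z (complex_of_real A)
                      + tail_integral d \<mu> z (A^2)"

lemma ray_rhs_eq: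
  assumes "Im z \<ge> 0" "0 < A" "0 < B" and decay: "\<And>l. l \<in> {0..d} \<Longrightarrow> decay \<mu> z l \<noteq> 0"
  shows "ray_rhs d \<mu> z A = ray_rhs d \<mu> z B"
proof -
  have "ray_rhs d \<mu> z A = ray_rhs d \<mu> z B" if "0 < A" "A \<le> B" for A B
  proof -
    have "0 < A^2" "A^2 \<le> B^2" using that by (auto intro: power_mono)
    then have "integral {A^2..B^2} (tail_integrand d \<mu> z) = tail_integral d \<mu> z (A^2) - tail_integral d \<mu> z (B^2)"
      using has_integral_tail_integrand[OF assms(1)] by (simp add: integral_unique)
    with ray_integration_by_parts[OF that decay] show ?thesis
      unfolding ray_rhs_def by (simp add: algebra_simps)
  qed
  then show ?thesis using assms(2,3) by (metis linorder_le_cases)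
qed

lemma norm_PhiProdC_of_real_le:
  "Im z \<ge> 0 \<Longrightarrow> norm (PhiProdC d \<mu> z J (complex_of_real t)) \<le> 5^(d+1)"
  using norm_PhiProd_le[of z d \<mu> J t] by (simp add: PhiProd_eq_PhiProdC)

lemma inverse_square_le_inverse: "(B::real) \<ge> 1 \<Longrightarrow> 1 / B^2 \<le> 1 / B"
  by (simp add: divide_le_eq_1 power2_eq_square field_simps)

lemma norm_boundary_term_le:
  assumes "Im z \<ge> 0" "B \<ge> 1"
  shows "norm (boundary_term d \<mu> z (complex_of_real B))
           \<le> 5^(d+1) / B + (\<Sum>l\<in>{0..d}. norm (coeff1 \<mu> z l)) * 5^(d+1) / B"
proof -
  let ?w = "complex_of_real B"
  have B_pos: "B > 0" using assms by simp
  have main: "norm (1/(?w * omega) * PhiProdC d \<mu> z {} ?w * gauss0 ?w) \<le> 5^(d+1) / B"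
  proof -
    have "norm (gauss0 ?w) = 1" unfolding gauss0_def using norm_exp_omega_square[of "B^2"] by simp
    then have "norm (1/(?w * omega) * PhiProdC d \<mu> z {} ?w * gauss0 ?w)
               = norm (PhiProdC d \<mu> z {} ?w) / (B * sqrt 2)"
      using B_pos by (simp add: norm_mult norm_divide norm_omega)
    also have "\<dots> \<le> norm (PhiProdC d \<mu> z {} ?w) / B"
      using B_pos by (intro divide_left_mono) auto
    also have "\<dots> \<le> 5^(d+1) / B"
      using B_pos by (intro divide_right_mono norm_PhiProdC_of_real_le assms) auto
    finally show ?thesis .
  qed
  have decay: "norm (coeff1 \<mu> z l * PhiProdC d \<mu> z {l} ?w * (1/?w^2) * gauss1 \<mu> z l ?w)
                 \<le> norm (coeff1 \<mu> z l) * 5^(d+1) / B" for l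
  proof -
    have "norm (gauss1 \<mu> z l ?w) \<le> 1"
      unfolding gauss1_def decay_def
      using norm_exp_omega_square_mult_le[of "B^2" "1 + complex_of_real ((\<mu> l)^2) * z"] assms by simp
    then have "norm (coeff1 \<mu> z l * PhiProdC d \<mu> z {l} ?w * (1/?w^2) * gauss1 \<mu> z l ?w)
       \<le> norm (coeff1 \<mu> z l) * 5^(d+1) * (1/B^2) * 1"
      unfolding norm_mult using B_pos
      by (intro mult_mono norm_PhiProdC_of_real_le assms) (auto simp: norm_divide norm_power)
    also have "\<dots> \<le> norm (coeff1 \<mu> z l) * 5^(d+1) * (1/B)"
      unfolding mult_1_right using inverse_square_le_inverse[OF assms(2)] by (intro mult_left_mono) auto
    finally show ?thesis by simp
  qed
  have "norm (boundary_term d \<mu> z ?w) \<le> norm (1/(?w * omega) * PhiProdC d \<mu> z {} ?w * gauss0 ?w)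
      + (\<Sum>l\<in>{0..d}. norm (coeff1 \<mu> z l * PhiProdC d \<mu> z {l} ?w * (1/?w^2) * gauss1 \<mu> z l ?w))"
    unfolding boundary_term_def by (rule order_trans[OF norm_triangle_ineq add_left_mono[OF norm_sum]])
  also have "\<dots> \<le> 5^(d+1) / B + (\<Sum>l\<in>{0..d}. norm (coeff1 \<mu> z l) * 5^(d+1) / B)"
    by (intro add_mono main sum_mono decay)
  finally show ?thesis by (simp add: sum_distrib_right sum_divide_distrib)
qed

lemma powr_neg_half_square:
  assumes "B > 0"
  shows "(B^2) powr (-1/2) = 1 / (B::real)"
proof -
  have "(B^2) powr (-1/2) = (B powr 2) powr (-1/2)"
    using assms by (subst powr_realpow[of B 2, symmetric]) auto
  also have "\<dots> = B powr (-1)" by (simp add: powr_powr)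
  also have "\<dots> = 1 / B" using assms by (simp add: powr_minus_divide)
  finally show ?thesis .
qed

lemma norm_tail_integral_le:
  assumes "Im z \<ge> 0" "B \<ge> 1"
  shows "norm (tail_integral d \<mu> z (B^2))
     \<le> 5^(d+1) / B + (\<Sum>l\<in>{0..d}. norm (coeff1 \<mu> z l)) * 5^(d+1) / B
       + (\<Sum>l1\<in>{0..d}. \<Sum>l2\<in>{0..d} - {l1}. norm (coeff2 \<mu> z l1 l2)) * (2 * 5^(d+1)) / B"
proof -
  have B_pos: "B > 0" and B2_pos: "B^2 > 0" using assms by auto
  let ?M = "5^(d+1) :: real"
  have t0: "norm (- 1 / (2 * omega) * integral {B^2..} (tail0 d \<mu> z)) \<le> ?M / B"
  proof -
    have "norm (- 1 / (2 * omega) * integral {B^2..} (tail0 d \<mu> z))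
          = norm (integral {B^2..} (tail0 d \<mu> z)) / (2 * sqrt 2)"
      by (simp add: norm_mult norm_divide norm_omega)
    also have "\<dots> \<le> (?M * (2 * (B^2) powr (-1/2))) / (2 * sqrt 2)"
      by (intro divide_right_mono norm_integral_tail0_le[OF assms(1) B2_pos]) auto
    also have "\<dots> = (?M / B) / sqrt 2" unfolding powr_neg_half_square[OF B_pos] by simp
    also have "\<dots> \<le> ?M / B" using B_pos by (simp add: divide_le_eq mult_le_cancel_left1)
    finally show ?thesis .
  qed
  have t1: "norm (coeff1 \<mu> z l * integral {B^2..} (tail1 d \<mu> z l)) \<le> norm (coeff1 \<mu> z l) * ?M / B" for l
  proof -
    have "norm (coeff1 \<mu> z l * integral {B^2..} (tail1 d \<mu> z l))
            \<le> norm (coeff1 \<mu> z l) * (?M * (1 / B^2))"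
      unfolding norm_mult by (intro mult_left_mono norm_integral_tail1_le[OF assms(1) B2_pos]) auto
    also have "\<dots> \<le> norm (coeff1 \<mu> z l) * (?M * (1 / B))"
      using inverse_square_le_inverse[OF assms(2)] by (intro mult_left_mono) auto
    finally show ?thesis by simp
  qed
  have t2: "norm (coeff2 \<mu> z l1 l2 * integral {B^2..} (tail2 d \<mu> z l1 l2))
              \<le> norm (coeff2 \<mu> z l1 l2) * (2 * ?M) / B" for l1 l2
  proof -
    have "norm (coeff2 \<mu> z l1 l2 * integral {B^2..} (tail2 d \<mu> z l1 l2))
            \<le> norm (coeff2 \<mu> z l1 l2) * (?M * (2 * (B^2) powr (-1/2)))"
      unfolding norm_mult by (intro mult_left_mono norm_integral_tail2_le[OF assms(1) B2_pos]) auto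
    then show ?thesis unfolding powr_neg_half_square[OF B_pos] by simp
  qed
  have "norm (tail_integral d \<mu> z (B^2)) \<le> norm (- 1 / (2 * omega) * integral {B^2..} (tail0 d \<mu> z))
      + (\<Sum>l\<in>{0..d}. norm (coeff1 \<mu> z l * integral {B^2..} (tail1 d \<mu> z l)))
      + (\<Sum>l1\<in>{0..d}. \<Sum>l2\<in>{0..d} - {l1}. norm (coeff2 \<mu> z l1 l2 * integral {B^2..} (tail2 d \<mu> z l1 l2)))"
    unfolding tail_integral_def
    by (rule order_trans[OF norm_triangle_ineq add_mono[OF norm_triangle_ineq4[THEN order_trans]
         order_trans[OF norm_sum sum_mono[OF norm_sum]]]]) (intro add_left_mono norm_sum)
  also have "\<dots> \<le> ?M / B + (\<Sum>l\<in>{0..d}. norm (coeff1 \<mu> z l) * ?M / B)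
      + (\<Sum>l1\<in>{0..d}. \<Sum>l2\<in>{0..d} - {l1}. norm (coeff2 \<mu> z l1 l2) * (2 * ?M) / B)"
    by (intro add_mono t0 sum_mono t1 t2)
  finally show ?thesis by (simp add: sum_distrib_right sum_divide_distrib)
qed

definition ray_error_const :: "nat \<Rightarrow> (nat \<Rightarrow> real) \<Rightarrow> complex \<Rightarrow> real" where
  "ray_error_const d \<mu> z = 5^(d+1) * (2 + 2 * (\<Sum>l\<in>{0..d}. norm (coeff1 \<mu> z l))
    + 2 * (\<Sum>l1\<in>{0..d}. \<Sum>l2\<in>{0..d} - {l1}. norm (coeff2 \<mu> z l1 l2)))"

lemma norm_ray_rhs_minus_integral_le:
  assumes "Im z \<ge> 0" "B \<ge> 1"
  shows "norm (ray_rhs d \<mu> z B - integral {0..B} (Iintegrand d \<mu> z)) \<le> ray_error_const d \<mu> z / B"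
proof -
  have "norm (ray_rhs d \<mu> z B - integral {0..B} (Iintegrand d \<mu> z))
        \<le> norm (boundary_term d \<mu> z (complex_of_real B)) + norm (tail_integral d \<mu> z (B^2))"
    unfolding ray_rhs_def by (simp add: norm_triangle_ineq)
  also have "\<dots> \<le> (5^(d+1) / B + (\<Sum>l\<in>{0..d}. norm (coeff1 \<mu> z l)) * 5^(d+1) / B) +
      (5^(d+1) / B + (\<Sum>l\<in>{0..d}. norm (coeff1 \<mu> z l)) * 5^(d+1) / B
      + (\<Sum>l1\<in>{0..d}. \<Sum>l2\<in>{0..d} - {l1}. norm (coeff2 \<mu> z l1 l2)) * (2 * 5^(d+1)) / B)"
    by (intro add_mono norm_boundary_term_le norm_tail_integral_le assms)
  also have "\<dots> = ray_error_const d \<mu> z / B"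
    unfolding ray_error_const_def using assms by (simp add: field_simps)
  finally show ?thesis .
qed

lemma tendsto_ray_integral:
  assumes "Im z \<ge> 0" "A > 0" and decay: "\<And>l. l \<in> {0..d} \<Longrightarrow> decay \<mu> z l \<noteq> 0"
  shows "((\<lambda>B. integral {0..B} (Iintegrand d \<mu> z)) \<longlongrightarrow> ray_rhs d \<mu> z A) at_top"
proof -
  have "((\<lambda>B. ray_rhs d \<mu> z A - integral {0..B} (Iintegrand d \<mu> z)) \<longlongrightarrow> 0) at_top"
  proof (rule Lim_null_comparison)
    show "\<forall>\<^sub>F B in at_top. norm (ray_rhs d \<mu> z A - integral {0..B} (Iintegrand d \<mu> z))
                           \<le> ray_error_const d \<mu> z / B"
      using eventually_ge_at_top[of "1::real"]
    proof eventually_elim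
      case (elim B)
      then have "ray_rhs d \<mu> z A = ray_rhs d \<mu> z B" by (intro ray_rhs_eq assms) auto
      then show ?case using norm_ray_rhs_minus_integral_le[OF assms(1) elim] by simp
    qed
    show "((\<lambda>B. ray_error_const d \<mu> z / B) \<longlongrightarrow> 0) at_top"
      by (intro tendsto_divide_0[OF tendsto_const] filterlim_at_top_imp_at_infinity filterlim_ident)
  qed
  then have "((\<lambda>B. ray_rhs d \<mu> z A - (ray_rhs d \<mu> z A - integral {0..B} (Iintegrand d \<mu> z)))
               \<longlongrightarrow> ray_rhs d \<mu> z A - 0) at_top"
    by (intro tendsto_diff tendsto_const)
  then show ?thesis by simp
qed

lemma Ifun_eq_ray_rhs:
  assumes "Im z \<ge> 0" "A > 0" and "\<And>l. l \<in> {0..d} \<Longrightarrow> decay \<mu> z l \<noteq> 0"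
  shows "Ifun d \<mu> z = ray_rhs d \<mu> z A"
  unfolding Ifun_def by (rule tendsto_Lim[OF _ tendsto_ray_integral[OF assms]]) simp

section \<open>Continuity and analyticity\<close>

definition S_plus :: "nat \<Rightarrow> (nat \<Rightarrow> real) \<Rightarrow> complex set" where
  "S_plus d \<mu> = {z. Im z \<ge> 0} - {- 1 / complex_of_real ((\<mu> j)^2) | j. j \<in> {0..d}}"

lemma S_plus_Im_nonneg: "z \<in> S_plus d \<mu> \<Longrightarrow> Im z \<ge> 0"
  by (simp add: S_plus_def)

lemma decay_neq_0:
  assumes "\<forall>j\<in>{0..d}. \<mu> j \<noteq> 0" "z \<in> S_plus d \<mu>" "l \<in> {0..d}"
  shows "decay \<mu> z l \<noteq> 0"
proof
  assume "decay \<mu> z l = 0"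
  moreover have "complex_of_real ((\<mu> l)^2) \<noteq> 0" using assms(1,3) by simp
  ultimately have "z = - 1 / complex_of_real ((\<mu> l)^2)"
    by (simp add: decay_def field_simps add_eq_0_iff)
  then show False using assms(2,3) by (auto simp: S_plus_def)
qed

lemma S_plus_neighbourhood:
  assumes "z0 \<in> S_plus d \<mu>"
  obtains r where "r > 0" "cball z0 r \<inter> {z. Im z \<ge> 0} \<subseteq> S_plus d \<mu>"
proof -
  let ?P = "{- 1 / complex_of_real ((\<mu> j)^2) | j. j \<in> {0..d}}"
  have "?P = (\<lambda>j. - 1 / complex_of_real ((\<mu> j)^2)) ` {0..d}" by auto
  then have "finite ?P" by simp
  then obtain \<delta> where \<delta>: "\<delta> > 0" "\<And>x. x \<in> ?P \<Longrightarrow> x \<noteq> z0 \<Longrightarrow> \<delta> \<le> dist z0 x"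
    using finite_set_avoid[of ?P z0] by blast
  have "z0 \<notin> ?P" using assms by (simp add: S_plus_def)
  then have "cball z0 (\<delta>/2) \<inter> {z. Im z \<ge> 0} \<subseteq> S_plus d \<mu>"
    using \<delta> by (force simp: S_plus_def)
  with \<delta>(1) show ?thesis by (intro that[of "\<delta>/2"]) auto
qed

lemma continuous_on_Iintegrand_param:
  "continuous_on ({z. Im z \<ge> 0} \<times> T) (\<lambda>(z, t). Iintegrand d \<mu> z t)"
proof -
  have "continuous_on ({z. Im z \<ge> 0} \<times> T) (\<lambda>p. csqrt (fst p))"
    by (rule continuous_on_compose2[OF continuous_on_csqrt_upper_half_plane continuous_on_fst]) auto
  then have "continuous_on ({z. Im z \<ge> 0} \<times> T) (\<lambda>p.
      (\<Prod>j\<in>{0..d} - {}. Phi (complex_of_real (\<mu> j) * csqrt (fst p) * omega * complex_of_real (snd p)))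
      * exp (- (omega^2 * complex_of_real ((snd p)^2)) / 2) * omega)"
    by (intro continuous_intros) auto
  then show ?thesis by (simp add: Iintegrand_def PhiProd_def split_beta')
qed

lemma continuous_on_ray_integral:
  "continuous_on {z. Im z \<ge> 0} (\<lambda>z. integral {0..B} (Iintegrand d \<mu> z))"
proof -
  have "continuous_on {z. Im z \<ge> 0} (\<lambda>z. integral (cbox 0 B) (Iintegrand d \<mu> z))"
    by (rule integral_continuous_on_param) (rule continuous_on_Iintegrand_param)
  then show ?thesis by simp
qed

definition Iintegrand_deriv :: "nat \<Rightarrow> (nat \<Rightarrow> real) \<Rightarrow> complex \<Rightarrow> real \<Rightarrow> complex" where
  "Iintegrand_deriv d \<mu> z t =
     (\<Sum>l\<in>{0..d}. gauss_density (complex_of_real (\<mu> l) * csqrt z * omega * complex_of_real t)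
          * (complex_of_real (\<mu> l) * omega * complex_of_real t / (2 * csqrt z))
          * (\<Prod>j\<in>{0..d} - {l}. Phi (complex_of_real (\<mu> j) * csqrt z * omega * complex_of_real t)))
     * exp (- (omega^2 * complex_of_real (t^2)) / 2) * omega"

lemma has_field_derivative_Iintegrand:
  assumes "z \<notin> \<real>\<^sub>\<le>\<^sub>0"
  shows "((\<lambda>z. Iintegrand d \<mu> z t) has_field_derivative Iintegrand_deriv d \<mu> z t) (at z)"
proof -
  have "csqrt z \<noteq> 0" using assms by auto
  then have "((\<lambda>z. \<Prod>j\<in>{0..d}. Phi (complex_of_real (\<mu> j) * csqrt z * omega * complex_of_real t))
      has_field_derivative
     (\<Sum>l\<in>{0..d}. gauss_density (complex_of_real (\<mu> l) * csqrt z * omega * complex_of_real t)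
          * (complex_of_real (\<mu> l) * omega * complex_of_real t / (2 * csqrt z))
          * (\<Prod>j\<in>{0..d} - {l}. Phi (complex_of_real (\<mu> j) * csqrt z * omega * complex_of_real t)))) (at z)"
    by (intro has_field_derivative_prod)
       (auto intro!: derivative_eq_intros assms simp: field_simps)
  then have "((\<lambda>z. (\<Prod>j\<in>{0..d}. Phi (complex_of_real (\<mu> j) * csqrt z * omega * complex_of_real t))
       * (exp (- (omega^2 * complex_of_real (t^2)) / 2) * omega))
     has_field_derivative Iintegrand_deriv d \<mu> z t) (at z)"
    unfolding Iintegrand_deriv_def by (rule DERIV_cmult_right[THEN DERIV_cong]) (simp add: ac_simps)
  then show ?thesis by (simp add: Iintegrand_def PhiProd_def ac_simps)
qed

lemma holomorphic_on_ray_integral: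
  assumes "open U" "convex U" "U \<subseteq> {z. Im z > 0}"
  shows "(\<lambda>z. integral {0..B} (Iintegrand d \<mu> z)) holomorphic_on U"
proof -
  have not_nonpos: "z \<notin> \<real>\<^sub>\<le>\<^sub>0" if "z \<in> U" for z
    using assms(3) that by (auto simp: complex_nonpos_Reals_iff)
  have csqrt_cont: "continuous_on (U \<times> cbox 0 B) (\<lambda>p. csqrt (fst p))"
    using assms(3)
    by (intro continuous_on_compose2[OF continuous_on_csqrt_upper_half_plane continuous_on_fst]) auto
  have "continuous_on (U \<times> cbox 0 B) (\<lambda>p.
     (\<Sum>l\<in>{0..d}. gauss_density (complex_of_real (\<mu> l) * csqrt (fst p) * omega * complex_of_real (snd p))
        * (complex_of_real (\<mu> l) * omega * complex_of_real (snd p) / (2 * csqrt (fst p)))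
        * (\<Prod>j\<in>{0..d} - {l}. Phi (complex_of_real (\<mu> j) * csqrt (fst p) * omega * complex_of_real (snd p))))
     * exp (- (omega^2 * complex_of_real ((snd p)^2)) / 2) * omega)"
  proof (intro continuous_intros csqrt_cont)
    show "\<forall>p\<in>U \<times> cbox 0 B. 2 * csqrt (fst p) \<noteq> 0"
      using not_nonpos by (fastforce simp: complex_nonpos_Reals_iff)
  qed auto
  then have "continuous_on (U \<times> cbox 0 B) (\<lambda>(z, t). Iintegrand_deriv d \<mu> z t)"
    by (simp add: Iintegrand_deriv_def split_beta')
  then have "(\<lambda>z. integral (cbox 0 B) (Iintegrand d \<mu> z)) holomorphic_on U"
    using assms(1,2) not_nonpos
    by (intro leibniz_rule_holomorphic[where fx = "Iintegrand_deriv d \<mu>"]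
          has_field_derivative_at_within[OF has_field_derivative_Iintegrand])
       (auto intro: integrable_Iintegrand)
  then show ?thesis by simp
qed

lemma continuous_on_ray_error_const:
  assumes "\<forall>j\<in>{0..d}. \<mu> j \<noteq> 0"
  shows "continuous_on (S_plus d \<mu>) (ray_error_const d \<mu>)"
proof -
  have "continuous_on (S_plus d \<mu>) csqrt"
    by (rule continuous_on_subset[OF continuous_on_csqrt_upper_half_plane]) (auto simp: S_plus_def)
  moreover have "\<forall>z\<in>S_plus d \<mu>. 1 + complex_of_real ((\<mu> l)^2) * z \<noteq> 0" if "l \<in> {0..d}" for l
    using decay_neq_0[OF assms _ that] by (simp add: decay_def)
  ultimately show ?thesis
    unfolding ray_error_const_def[abs_def] coeff1_def coeff2_def decay_def
    by (intro continuous_intros) (auto simp: pi_gt_zero)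
qed

text \<open>The error bound of \<open>norm_ray_rhs_minus_integral_le\<close> is continuous in \<open>z\<close>, hence
  bounded on compact sets: the convergence is locally uniform.\<close>
lemma uniform_limit_ray_integral:
  assumes "\<forall>j\<in>{0..d}. \<mu> j \<noteq> 0" "compact N" "N \<subseteq> S_plus d \<mu>"
  shows "uniform_limit N (\<lambda>B z. integral {0..B} (Iintegrand d \<mu> z)) (Ifun d \<mu>) at_top"
proof -
  have "compact (ray_error_const d \<mu> ` N)"
    using assms by (intro compact_continuous_image continuous_on_subset[OF continuous_on_ray_error_const])
  then obtain C0 where C0: "\<And>z. z \<in> N \<Longrightarrow> norm (ray_error_const d \<mu> z) \<le> C0"
    using compact_imp_bounded bounded_iff by (metis imageI)
  define C where "C = max C0 1"
  have C: "\<And>z. z \<in> N \<Longrightarrow> ray_error_const d \<mu> z \<le> C" "C > 0"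
    using C0 by (force simp: C_def)+
  show ?thesis unfolding uniform_limit_iff
  proof (intro allI impI)
    fix e :: real assume e: "e > 0"
    show "\<forall>\<^sub>F B in at_top. \<forall>z\<in>N. dist (integral {0..B} (Iintegrand d \<mu> z)) (Ifun d \<mu> z) < e"
      using eventually_ge_at_top[of "max 1 (2 * C / e)"]
    proof eventually_elim
      case (elim B)
      then have B: "B \<ge> 1" "B \<ge> 2 * C / e" by auto
      show ?case
      proof
        fix z assume z: "z \<in> N"
        then have z_S: "z \<in> S_plus d \<mu>" using assms(3) by auto
        note Im_z = S_plus_Im_nonneg[OF z_S] and decay = decay_neq_0[OF assms(1) z_S]
        have "dist (integral {0..B} (Iintegrand d \<mu> z)) (Ifun d \<mu> z)
              = norm (ray_rhs d \<mu> z B - integral {0..B} (Iintegrand d \<mu> z))"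
          using B Ifun_eq_ray_rhs[OF Im_z _ decay, of B] by (simp add: dist_norm norm_minus_commute)
        also have "\<dots> \<le> ray_error_const d \<mu> z / B" by (rule norm_ray_rhs_minus_integral_le[OF Im_z B(1)])
        also have "\<dots> \<le> C / B" using C(1)[OF z] B by (intro divide_right_mono) auto
        also have "\<dots> < e" using B e C(2) by (simp add: field_simps)
        finally show "dist (integral {0..B} (Iintegrand d \<mu> z)) (Ifun d \<mu> z) < e" .
      qed
    qed
  qed
qed

lemma continuous_on_Ifun:
  assumes "\<forall>j\<in>{0..d}. \<mu> j \<noteq> 0"
  shows "continuous_on (S_plus d \<mu>) (Ifun d \<mu>)"
  unfolding continuous_on_eq_continuous_within
proof
  fix z0 assume z0: "z0 \<in> S_plus d \<mu>"
  then obtain r where r: "r > 0" "cball z0 r \<inter> {z. Im z \<ge> 0} \<subseteq> S_plus d \<mu>"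
    by (rule S_plus_neighbourhood)
  let ?N = "cball z0 r \<inter> {z. Im z \<ge> 0}"
  have "compact ?N" by (intro compact_Int_closed compact_cball closed_halfspace_Im_ge)
  then have "continuous_on ?N (Ifun d \<mu>)"
    using continuous_on_subset[OF continuous_on_ray_integral]
    by (intro uniform_limit_theorem[OF _ uniform_limit_ray_integral[OF assms _ r(2)]]
          always_eventually allI) auto
  moreover have "z0 \<in> ?N" using r z0 by (auto simp: S_plus_def)
  ultimately have "continuous (at z0 within ?N) (Ifun d \<mu>)"
    by (simp add: continuous_on_eq_continuous_within)
  then have "continuous (at z0 within (S_plus d \<mu> \<inter> ball z0 r)) (Ifun d \<mu>)"
    by (rule continuous_within_subset) (auto simp: S_plus_def)
  moreover have "at z0 within S_plus d \<mu> = at z0 within (S_plus d \<mu> \<inter> ball z0 r)"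
    using r by (intro at_within_nhd[of _ "ball z0 r"]) auto
  ultimately show "continuous (at z0 within S_plus d \<mu>) (Ifun d \<mu>)" by (simp add: continuous_within)
qed

lemma analytic_on_Ifun:
  assumes "\<forall>j\<in>{0..d}. \<mu> j \<noteq> 0"
  shows "Ifun d \<mu> analytic_on {z. Im z > 0}"
  unfolding analytic_on_def
proof
  fix z0 :: complex assume "z0 \<in> {z. Im z > 0}"
  then have Im_z0: "Im z0 > 0" by simp
  then have "z0 \<in> S_plus d \<mu>" by (auto simp: S_plus_def)
  then obtain r0 where r0: "r0 > 0" "cball z0 r0 \<inter> {z. Im z \<ge> 0} \<subseteq> S_plus d \<mu>"
    by (rule S_plus_neighbourhood)
  define r where "r = min r0 (Im z0 / 2)"
  have r_pos: "r > 0" using r0 Im_z0 by (simp add: r_def)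
  have Im_pos: "Im z > 0" if "z \<in> cball z0 r" for z
  proof -
    have "\<bar>Im z0 - Im z\<bar> \<le> dist z0 z" unfolding dist_norm using abs_Im_le_cmod[of "z0 - z"] by simp
    also have "\<dots> \<le> Im z0 / 2" using that by (simp add: r_def)
    finally show ?thesis using Im_z0 by linarith
  qed
  have "cball z0 r \<subseteq> S_plus d \<mu>"
    using r0(2) Im_pos by (force simp: r_def)
  then have limit: "uniform_limit (cball z0 r) (\<lambda>B z. integral {0..B} (Iintegrand d \<mu> z)) (Ifun d \<mu>) at_top"
    by (rule uniform_limit_ray_integral[OF assms compact_cball])
  have approximants: "\<forall>\<^sub>F B in at_top. continuous_on (cball z0 r) (\<lambda>z. integral {0..B} (Iintegrand d \<mu> z))
           \<and> (\<lambda>z. integral {0..B} (Iintegrand d \<mu> z)) holomorphic_on ball z0 r"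
    using Im_pos
    by (intro always_eventually allI conjI holomorphic_on_ray_integral
          continuous_on_subset[OF continuous_on_ray_integral]) force+
  obtain "Ifun d \<mu> holomorphic_on ball z0 r"
    by (rule holomorphic_uniform_limit[OF approximants limit]) simp
  then show "\<exists>e>0. Ifun d \<mu> holomorphic_on ball z0 e" using r_pos by blast
qed

lemma ray_rhs_expanded:
  "ray_rhs d \<mu> z A = integral {0..A} (Iintegrand d \<mu> z)
     + 1 / (complex_of_real A * omega) * PhiProd d \<mu> {} z A * exp (- (omega^2 * complex_of_real (A^2)) / 2)
     - 1 / (2 * omega) * integral {A^2..} (tail0 d \<mu> z)
     + (\<Sum>l\<in>{0..d}. coeff1 \<mu> z l * PhiProd d \<mu> {l} z A * complex_of_real (1 / A^2)
         * exp (- (omega^2 * complex_of_real (A^2) / 2) * decay \<mu> z l))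
     - (\<Sum>l\<in>{0..d}. coeff1 \<mu> z l * integral {A^2..} (tail1 d \<mu> z l))
     + (\<Sum>l1\<in>{0..d}. \<Sum>l2\<in>{0..d} - {l1}. coeff2 \<mu> z l1 l2 * integral {A^2..} (tail2 d \<mu> z l1 l2))"
  by (simp add: ray_rhs_def boundary_term_def tail_integral_def PhiProd_eq_PhiProdC gauss0_def gauss1_def
      algebra_simps)

lemma ray_formula:
  assumes "\<forall>j\<in>{0..d}. \<mu> j \<noteq> 0"
  shows "\<forall>z\<in>S_plus d \<mu>.
    (\<forall>B. Iintegrand d \<mu> z integrable_on {0..B}) \<and>
    ((\<lambda>B. integral {0..B} (Iintegrand d \<mu> z)) \<longlongrightarrow> Ifun d \<mu> z) at_top \<and>
    (\<forall>A::real. A > 0 \<longrightarrow>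
       tail0 d \<mu> z absolutely_integrable_on {A^2..} \<and>
       (\<forall>l\<in>{0..d}. tail1 d \<mu> z l absolutely_integrable_on {A^2..}) \<and>
       (\<forall>l1\<in>{0..d}. \<forall>l2\<in>{0..d}. l1 \<noteq> l2 \<longrightarrow> tail2 d \<mu> z l1 l2 absolutely_integrable_on {A^2..}) \<and>
       Ifun d \<mu> z = ray_rhs d \<mu> z A)"
proof (intro ballI conjI allI impI integrable_Iintegrand)
  fix z assume z: "z \<in> S_plus d \<mu>"
  note Im_z = S_plus_Im_nonneg[OF z] and decay = decay_neq_0[OF assms z]
  have Ifun_eq: "Ifun d \<mu> z = ray_rhs d \<mu> z A" if "A > 0" for A
    using Im_z that decay by (rule Ifun_eq_ray_rhs)
  show "((\<lambda>B. integral {0..B} (Iintegrand d \<mu> z)) \<longlongrightarrow> Ifun d \<mu> z) at_top"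
    unfolding Ifun_eq[OF zero_less_one] using Im_z zero_less_one decay by (rule tendsto_ray_integral)
  fix A :: real assume "A > 0"
  then have A: "A > 0" "A^2 > 0" by auto
  show "tail0 d \<mu> z absolutely_integrable_on {A^2..}"
    "tail1 d \<mu> z l absolutely_integrable_on {A^2..}"
    "tail2 d \<mu> z l1 l2 absolutely_integrable_on {A^2..}"
    "Ifun d \<mu> z = ray_rhs d \<mu> z A" for l l1 l2
    using absolutely_integrable_tail0 absolutely_integrable_tail1 absolutely_integrable_tail2
      Ifun_eq[OF A(1)] Im_z A(2) by auto
qed

theorem mainTheorem9:
  fixes d :: nat and \<mu> :: "nat \<Rightarrow> real"
  assumes mu_nz: "\<forall>j\<in>{0..d}. \<mu> j \<noteq> 0"
  defines "S \<equiv> {z::complex. Im z \<ge> 0} - {- 1 / complex_of_real ((\<mu> j)^2) | j. j \<in> {0..d}}"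
  shows
   "(\<forall>z\<in>S.
      (\<forall>B. Iintegrand d \<mu> z integrable_on {0..B}) \<and>
      ((\<lambda>B. integral {0..B} (Iintegrand d \<mu> z)) \<longlongrightarrow> Ifun d \<mu> z) at_top \<and>
      (\<forall>A::real. A > 0 \<longrightarrow>
         (\<lambda>x. PhiProd d \<mu> {} z (sqrt x) * exp (- (omega^2 * complex_of_real x) / 2)
                / complex_of_real (x powr (3/2))) absolutely_integrable_on {A^2..} \<and>
         (\<forall>l\<in>{0..d}.
           (\<lambda>x. PhiProd d \<mu> {l} z (sqrt x) * complex_of_real (1 / x^2)
                * exp (- (omega^2 * complex_of_real x / 2) * (1 + complex_of_real ((\<mu> l)^2) * z)))
             absolutely_integrable_on {A^2..}) \<and>
         (\<forall>l1\<in>{0..d}. \<forall>l2\<in>{0..d}. l1 \<noteq> l2 \<longrightarrow>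
           (\<lambda>x. PhiProd d \<mu> {l1, l2} z (sqrt x) / complex_of_real (x powr (3/2))
                * exp (- (omega^2 * complex_of_real x / 2)
                        * (1 + complex_of_real ((\<mu> l1)^2) * z + complex_of_real ((\<mu> l2)^2) * z)))
             absolutely_integrable_on {A^2..}) \<and>
         Ifun d \<mu> z =
             integral {0..A} (Iintegrand d \<mu> z)
           + 1 / (complex_of_real A * omega) * PhiProd d \<mu> {} z A
               * exp (- (omega^2 * complex_of_real (A^2)) / 2)
           - 1 / (2 * omega) *
               integral {A^2..} (\<lambda>x. PhiProd d \<mu> {} z (sqrt x)
                  * exp (- (omega^2 * complex_of_real x) / 2) / complex_of_real (x powr (3/2)))
           + (\<Sum>l\<in>{0..d}.
               complex_of_real (\<mu> l) * csqrt z
                 / (complex_of_real (sqrt (2*pi)) * omega^2 * (1 + complex_of_real ((\<mu> l)^2) * z))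
               * PhiProd d \<mu> {l} z A * complex_of_real (1 / A^2)
               * exp (- (omega^2 * complex_of_real (A^2) / 2) * (1 + complex_of_real ((\<mu> l)^2) * z)))
           - (\<Sum>l\<in>{0..d}.
               complex_of_real (\<mu> l) * csqrt z
                 / (complex_of_real (sqrt (2*pi)) * omega^2 * (1 + complex_of_real ((\<mu> l)^2) * z))
               * integral {A^2..} (\<lambda>x. PhiProd d \<mu> {l} z (sqrt x) * complex_of_real (1 / x^2)
                  * exp (- (omega^2 * complex_of_real x / 2) * (1 + complex_of_real ((\<mu> l)^2) * z))))
           + (\<Sum>l1\<in>{0..d}. \<Sum>l2\<in>{0..d} - {l1}.
               complex_of_real (\<mu> l1 * \<mu> l2) * z
                 / (complex_of_real (4 * pi) * omega * (1 + complex_of_real ((\<mu> l1)^2) * z))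
               * integral {A^2..} (\<lambda>x. PhiProd d \<mu> {l1, l2} z (sqrt x) / complex_of_real (x powr (3/2))
                  * exp (- (omega^2 * complex_of_real x / 2)
                          * (1 + complex_of_real ((\<mu> l1)^2) * z + complex_of_real ((\<mu> l2)^2) * z))))))
    \<and> continuous_on S (Ifun d \<mu>)
    \<and> Ifun d \<mu> analytic_on {z. Im z > 0}"
proof -
  have "S = S_plus d \<mu>" unfolding S_def S_plus_def ..
  then show ?thesis
    using ray_formula[OF mu_nz] continuous_on_Ifun[OF mu_nz] analytic_on_Ifun[OF mu_nz]
    unfolding ray_rhs_expanded tail0_def[abs_def] tail1_def[abs_def] tail2_def[abs_def]
      coeff1_def coeff2_def decay_def
    by (intro conjI) simp_all
qed
end
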